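(* Let $0=t_0<\dots<t_N=T$, $\tau_k=t_k-t_{k-1}$, $r_k=\tau_k/\tau_{k-1}$ ($2\le k\le N$). Let $r_{\max}\approx4.8645$ be the positive root of $x^3=(2x+1)^2$, fix $\delta\in(0,r_{\max})$, assume $r_2>0$ and $0<r_k\le r_{\max}-\delta$ for $3\le k\le N$, and set $C_r=\sqrt{r_{\max}}/(1+r_{\max})^2$. Let $\mathcal V_h$ be the space of grid functions $v=(v_0,\dots,v_M)$ with $v_0=v_M=0$, with $\Delta_hv_i=(v_{i+1}-2v_i+v_{i-1})/h^2$, $\nabla_hv_i=(v_{i+1}-v_{i-1})/(2h)$, $\langle u,v\rangle=\sum_{i=1}^{M-1}hu_iv_i$, $\|u\|=\sqrt{\langle u,u\rangle}$. Then for any $\epsilon>0$, any $2\le n\le N$ and any $u^k\in\mathcal V_h$ ($1\le k\le n$), $$2\sum_{k=2}^n\sum_{j=2}^k\theta^{(k)}_{k-j}\langle-\Delta_hu^j,u^k\rangle+\frac{\epsilon^2}{C_r\delta}\sum_{k=2}^n\tau_k\|u^k\|^2\ge2\epsilon\sum_{k=2}^n\sum_{j=2}^k\theta^{(k)}_{k-j}\langle\nabla_hu^j,u^k\rangle.$$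
   Context: BDF2 kernels: $b^{(1)}_0=1/\tau_1$; for $n\ge2$, $b^{(n)}_0=\frac{1+2r_n}{\tau_n(1+r_n)}$, $b^{(n)}_1=-\frac{r_n^2}{\tau_n(1+r_n)}$, $b^{(n)}_j=0$ for $2\le j\le n-1$. DOC kernels $\theta^{(n)}_{n-j}$ ($1\le j\le n$) are defined by $\sum_{j=k}^n\theta^{(n)}_{n-j}b^{(j)}_{j-k}=\delta_{nk}$ for all $1\le k\le n$. *)

theory Defs
  imports "HOL-Analysis.Analysis"
begin

definition tau :: "(nat \<Rightarrow> real) \<Rightarrow> nat \<Rightarrow> real" where
  "tau t k = t k - t (k - 1)"

definition ratio :: "(nat \<Rightarrow> real) \<Rightarrow> nat \<Rightarrow> real" where
  "ratio t k = tau t k / tau t (k - 1)"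

text \<open>BDF2 kernels b^{(n)}_j (only meaningful for n >= 1).\<close>
definition bdf2 :: "(nat \<Rightarrow> real) \<Rightarrow> nat \<Rightarrow> nat \<Rightarrow> real" where
  "bdf2 t n j =
     (if n = 1 then (if j = 0 then 1 / tau t 1 else 0)
      else if j = 0 then (1 + 2 * ratio t n) / (tau t n * (1 + ratio t n))
      else if j = 1 then - ((ratio t n)^2) / (tau t n * (1 + ratio t n))
      else 0)"

definition r_max :: real where
  "r_max = (THE x. x > 0 \<and> x ^ 3 = (2 * x + 1) ^ 2)"

definition C_r :: real where
  "C_r = sqrt r_max / (1 + r_max) ^ 2"

definition lap_h :: "real \<Rightarrow> (nat \<Rightarrow> real) \<Rightarrow> nat \<Rightarrow> real" where
  "lap_h h v i = (v (i + 1) - 2 * v i + v (i - 1)) / h ^ 2"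

definition grad_h :: "real \<Rightarrow> (nat \<Rightarrow> real) \<Rightarrow> nat \<Rightarrow> real" where
  "grad_h h v i = (v (i + 1) - v (i - 1)) / (2 * h)"

definition ip_h :: "real \<Rightarrow> nat \<Rightarrow> (nat \<Rightarrow> real) \<Rightarrow> (nat \<Rightarrow> real) \<Rightarrow> real" where
  "ip_h h M u v = (\<Sum>i = 1..M - 1. h * u i * v i)"

definition norm_h :: "real \<Rightarrow> nat \<Rightarrow> (nat \<Rightarrow> real) \<Rightarrow> real" where
  "norm_h h M u = sqrt (ip_h h M u u)"

end

theory Submission
  imports Defs
begin

text \<open>Put W^k = sum_{j=2..k} theta^(k)_{k-j} u^j. The DOC kernels form the inverse of the
lower bidiagonal BDF2 matrix, so u^k = b_0^(k) W^k + b_1^(k) W^(k-1), and summation by parts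
turns the diffusion term into 2 sum_k (D W^k, b_0^(k) D W^k + b_1^(k) D W^(k-1)) with D the
forward difference. Young's inequality with weight r_k^(3/2)/(1 + r_k) on the cross term makes
this telescope, and the step-ratio bound r_k <= r_max - delta leaves at least
C_r delta sum_k |D W^k|^2 / tau_k; the constants are handled through R = sqrt r_max, the real
root of R^3 = 2 R^2 + 1. The convection term is 2 eps sum_k (grad_h W^k, u^k), and Young's
inequality bounds each summand by C_r delta |D W^k|^2 / tau_k + eps^2 tau_k |u^k|^2 / (C_r delta).\<close>

lemma cubic_root_factored:
  fixes R :: real
  assumes "R ^ 3 = 2 * R\<^sup>2 + 1"
  shows "R\<^sup>2 * (R - 2) = 1" and "2 < R"
proof -
  show "R\<^sup>2 * (R - 2) = 1"
    using assms by (simp add: algebra_simps power2_eq_square power3_eq_cube)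
  then show "2 < R"
    by (smt (verit) mult_nonneg_nonpos zero_le_power2)
qed

lemma cubic_real_root_unique:
  fixes x y :: real
  assumes "x ^ 3 = 2 * x\<^sup>2 + 1" "y ^ 3 = 2 * y\<^sup>2 + 1"
  shows "x = y"
proof -
  have strict_mono: "a\<^sup>2 * (a - 2) < b\<^sup>2 * (b - 2)" if "2 < a" "a < b" for a b :: real
    using that by (intro mult_strict_mono power_strict_mono) auto
  show ?thesis
    using strict_mono[of x y] strict_mono[of y x] cubic_root_factored[OF assms(1)]
      cubic_root_factored[OF assms(2)]
    by (metis less_irrefl linorder_neqE_linordered_idom)
qed

lemma sqrt_cubic_iff:
  fixes x :: real
  assumes "0 < x"
  shows "x ^ 3 = (2 * x + 1)\<^sup>2 \<longleftrightarrow> sqrt x ^ 3 = 2 * sqrt x ^ 2 + 1"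
proof -
  have "(sqrt x ^ 3)\<^sup>2 = (sqrt x ^ 2) ^ 3"
    by (metis power_mult mult.commute)
  then have "x ^ 3 = (sqrt x ^ 3)\<^sup>2"
    using assms by simp
  also have "\<dots> = (2 * x + 1)\<^sup>2 \<longleftrightarrow> sqrt x ^ 3 = 2 * x + 1"
    by (rule power2_eq_iff_nonneg) (use assms in auto)
  finally show ?thesis
    using assms by simp
qed

lemma r_max_as_square:
  obtains R :: real where "0 < R" "R ^ 3 = 2 * R\<^sup>2 + 1" "r_max = R\<^sup>2"
proof -
  have "\<exists>R. 2 \<le> R \<and> R \<le> 3 \<and> R ^ 3 - 2 * R\<^sup>2 - 1 = (0::real)"
    by (rule IVT') (auto intro!: continuous_intros simp: power3_eq_cube power2_eq_square)
  then obtain R :: real where "2 \<le> R" "R ^ 3 - 2 * R\<^sup>2 - 1 = 0"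
    by blast
  then have R: "0 < R" "R ^ 3 = 2 * R\<^sup>2 + 1"
    by simp_all
  have "r_max = R\<^sup>2"
    unfolding r_max_def
  proof (rule the_equality)
    show "0 < R\<^sup>2 \<and> (R\<^sup>2) ^ 3 = (2 * R\<^sup>2 + 1)\<^sup>2"
      using R sqrt_cubic_iff[of "R\<^sup>2"] by simp
  next
    fix x :: real
    assume x: "0 < x \<and> x ^ 3 = (2 * x + 1)\<^sup>2"
    then have "sqrt x = R"
      using R sqrt_cubic_iff cubic_real_root_unique[of "sqrt x" R] by auto
    then show "x = R\<^sup>2"
      using x by auto
  qed
  with R that show ?thesis by blast
qed

text \<open>With a = sqrt (r_max - delta), the two bounds below are the inequality of
C_r_delta_bound at its endpoints r = 0 and r = a^2; in between it is linear in r once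
r sqrt r is bounded by r a.\<close>

lemma cubic_root_bound_at_zero:
  fixes R a :: real
  assumes R: "0 < R" "R ^ 3 = 2 * R\<^sup>2 + 1" and a: "0 < a" "a < R"
  defines "c \<equiv> R / (1 + R\<^sup>2)\<^sup>2 * (R\<^sup>2 - a\<^sup>2)"
  shows "c * (1 + a\<^sup>2) + a ^ 3 \<le> 2 * (1 + a\<^sup>2)"
proof -
  note R_factored = cubic_root_factored[OF R(2)]
  have "4 \<le> R\<^sup>2"
    using power_mono[of 2 R 2] R_factored(2) by simp
  then have "4 * (R - 2) \<le> R\<^sup>2 * (R - 2)"
    using R_factored(2) by (intro mult_right_mono) auto
  then have "R \<le> 4"
    unfolding R_factored(1) by simp
  have "(R\<^sup>2 - a\<^sup>2) * (1 + a\<^sup>2) \<le> ((1 + R\<^sup>2) / 2)\<^sup>2"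
    using sum_squares_ge_zero[of "R\<^sup>2 - a\<^sup>2 - (1 + a\<^sup>2)" 0]
    by (simp add: power2_eq_square algebra_simps)
  then have "c * (1 + a\<^sup>2) \<le> R / (1 + R\<^sup>2)\<^sup>2 * ((1 + R\<^sup>2) / 2)\<^sup>2"
    unfolding c_def mult.assoc using R by (intro mult_left_mono) auto
  also have "\<dots> = R / 4"
    using add_pos_nonneg[of 1 "R\<^sup>2"] by (simp add: field_simps)
  finally have "c * (1 + a\<^sup>2) \<le> R / 4" .
  moreover have "a ^ 3 \<le> 2 * a\<^sup>2 + 1"
  proof -
    have "a ^ 3 \<le> a\<^sup>2 * R"
      using a by (simp add: power3_eq_cube power2_eq_square)
    also have "\<dots> = 2 * a\<^sup>2 + a\<^sup>2 * (R - 2)"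
      by (simp add: algebra_simps)
    also have "\<dots> \<le> 2 * a\<^sup>2 + R\<^sup>2 * (R - 2)"
      using a R_factored(2) by (simp add: mult_right_mono power_strict_mono less_imp_le)
    finally show ?thesis
      using R_factored(1) by simp
  qed
  ultimately show ?thesis
    using \<open>R \<le> 4\<close> by simp
qed

lemma cubic_root_bound_at_top:
  fixes R a :: real
  assumes R: "0 < R" "R ^ 3 = 2 * R\<^sup>2 + 1" and a: "0 < a" "a < R"
  defines "c \<equiv> R / (1 + R\<^sup>2)\<^sup>2 * (R\<^sup>2 - a\<^sup>2)"
  shows "c * (1 + a\<^sup>2) \<le> 2 + 4 * a\<^sup>2 - 2 * a ^ 3"
proof -
  note R_factored = cubic_root_factored[OF R(2)]
  have squares: "a\<^sup>2 < R\<^sup>2" "0 < 1 + R\<^sup>2"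
    using a by (auto intro: power_strict_mono add_pos_nonneg)
  have "R\<^sup>2 * (2 * (R - 2) * (1 + R\<^sup>2)) = 2 * (1 + R\<^sup>2) * (R\<^sup>2 * (R - 2))"
    by (simp only: ac_simps)
  also have "\<dots> \<ge> R\<^sup>2 * R"
    using R R_factored by (simp add: power2_eq_square power3_eq_cube)
  finally have "R \<le> 2 * (R - 2) * (1 + R\<^sup>2)"
    using R by simp
  then have "R / (1 + R\<^sup>2) \<le> 2 * (R - 2)"
    using squares by (simp add: pos_divide_le_eq)
  then have "R * (R + a) / (1 + R\<^sup>2) \<le> 2 * (R - 2) * (R + a)"
    using R a by (metis add_pos_pos less_imp_le mult_right_mono times_divide_eq_left)
  also have "\<dots> \<le> 2 * (a\<^sup>2 + a * (R - 2) + R * (R - 2))"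
    by (simp add: algebra_simps)
  finally have bound: "R * (R + a) / (1 + R\<^sup>2) \<le> 2 * (a\<^sup>2 + a * (R - 2) + R * (R - 2))" .
  have "c * (1 + a\<^sup>2)
      = (R - a) * (R * (R + a) / (1 + R\<^sup>2)) * ((1 + a\<^sup>2) / (1 + R\<^sup>2))"
    using squares by (simp add: c_def field_simps power2_eq_square)
  also have "\<dots> \<le> (R - a) * (R * (R + a) / (1 + R\<^sup>2))"
    using R a squares by (intro mult_left_le) auto
  also have "\<dots> \<le> (R - a) * (2 * (a\<^sup>2 + a * (R - 2) + R * (R - 2)))"
    using bound a by (intro mult_left_mono) auto
  also have "\<dots> = 2 + 4 * a\<^sup>2 - 2 * a ^ 3"
    using R by (simp add: algebra_simps power2_eq_square power3_eq_cube)
  finally show ?thesis .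
qed

definition bdf2_cross_weight :: "real \<Rightarrow> real" where
  "bdf2_cross_weight r = r * sqrt r / (1 + r)"

lemma bdf2_cross_weight_mono:
  assumes "0 \<le> r" "r \<le> s"
  shows "bdf2_cross_weight r \<le> bdf2_cross_weight s"
proof -
  have "r / (1 + r) * sqrt r \<le> s / (1 + s) * sqrt s"
    using assms by (intro mult_mono) (auto simp: field_simps)
  then show ?thesis
    by (simp add: bdf2_cross_weight_def)
qed

lemma C_r_delta_bound:
  assumes "0 < \<delta>" "\<delta> < r_max" "0 \<le> r" "r \<le> r_max - \<delta>"
  shows "C_r * \<delta> + bdf2_cross_weight (r_max - \<delta>) \<le> (2 * (1 + 2 * r) - r * sqrt r) / (1 + r)"
proof -
  obtain R where R: "0 < R" "R ^ 3 = 2 * R\<^sup>2 + 1" "r_max = R\<^sup>2"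
    using r_max_as_square by blast
  define a where "a = sqrt (r_max - \<delta>)"
  have a: "0 < a" "a < R" "a\<^sup>2 = r_max - \<delta>"
    using assms R by (auto simp: a_def real_less_lsqrt)
  define c where "c = R / (1 + R\<^sup>2)\<^sup>2 * (R\<^sup>2 - a\<^sup>2)"
  define K where "K = C_r * \<delta> + bdf2_cross_weight (r_max - \<delta>)"
  have "0 < 1 + a\<^sup>2"
    by (simp add: add_pos_nonneg)
  have "sqrt r_max = R"
    using R(1,3) by (metis abs_of_pos real_sqrt_abs)
  then have "C_r * \<delta> = c"
    using R a by (simp add: C_r_def c_def)
  moreover have "bdf2_cross_weight (r_max - \<delta>) = a ^ 3 / (1 + a\<^sup>2)"
    using a by (simp add: bdf2_cross_weight_def a_def[symmetric] power2_eq_square power3_eq_cube)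
  ultimately have K: "K * (1 + a\<^sup>2) = c * (1 + a\<^sup>2) + a ^ 3"
    using \<open>0 < 1 + a\<^sup>2\<close> by (simp add: K_def field_simps)
  define g where "g x = 2 + 4 * x - x * a - K * (1 + x)" for x
  have "K * (1 + a\<^sup>2) \<le> 2 * (1 + a\<^sup>2)"
    using cubic_root_bound_at_zero[OF R(1,2) a(1,2)] K by (simp add: c_def)
  then have "g 0 \<ge> 0"
    using \<open>0 < 1 + a\<^sup>2\<close> mult_le_cancel_right_pos[of "1 + a\<^sup>2" K 2] by (simp add: g_def)
  moreover have "g (a\<^sup>2) \<ge> 0"
    using cubic_root_bound_at_top[OF R(1,2) a(1,2)] K
    by (simp add: g_def c_def algebra_simps power2_eq_square power3_eq_cube)
  moreover have "g r * a\<^sup>2 = (a\<^sup>2 - r) * g 0 + r * g (a\<^sup>2)"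
    by (simp add: g_def algebra_simps)
  ultimately have "g r * a\<^sup>2 \<ge> 0"
    using assms a by simp
  then have "g r \<ge> 0"
    using a(1) by (simp add: zero_le_mult_iff)
  moreover have "r * sqrt r \<le> r * a"
    using assms a by (intro mult_left_mono) (auto simp: a_def)
  ultimately have "K * (1 + r) \<le> 2 * (1 + 2 * r) - r * sqrt r"
    by (simp add: g_def algebra_simps)
  then show ?thesis
    using assms by (simp add: K_def[symmetric] pos_le_divide_eq)
qed

lemma bdf2_cross_term_young:
  fixes x y \<tau>' r :: real
  assumes "0 < \<tau>'" "0 < r"
  shows "- bdf2_cross_weight r * (x\<^sup>2 / (r * \<tau>') + y\<^sup>2 / \<tau>')
    \<le> 2 * (- r\<^sup>2 / (r * \<tau>' * (1 + r))) * x * y"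
proof -
  define q where "q = sqrt r"
  have q: "0 < q" "r = q\<^sup>2" "1 + q\<^sup>2 \<noteq> 0"
    using assms by (auto simp: q_def add_pos_nonneg)
  have weight: "bdf2_cross_weight r * (x\<^sup>2 / (r * \<tau>') + y\<^sup>2 / \<tau>')
      = (q * x\<^sup>2 + q ^ 3 * y\<^sup>2) / (\<tau>' * (1 + q\<^sup>2))"
    using assms q unfolding bdf2_cross_weight_def q_def[symmetric]
    by (simp add: divide_simps) (simp add: algebra_simps power2_eq_square power3_eq_cube)
  have coefficient: "r\<^sup>2 / (r * \<tau>' * (1 + r)) = q\<^sup>2 / (\<tau>' * (1 + q\<^sup>2))"
    using assms q by (simp add: power2_eq_square)
  have "2 * (- r\<^sup>2 / (r * \<tau>' * (1 + r))) * x * y + bdf2_cross_weight r * (x\<^sup>2 / (r * \<tau>') + y\<^sup>2 / \<tau>')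
      = q * (x - q * y)\<^sup>2 / (\<tau>' * (1 + q\<^sup>2))"
    unfolding weight minus_divide_left[symmetric] coefficient using assms q
    by (simp add: divide_simps) (simp add: algebra_simps power2_eq_square power3_eq_cube)
  also have "\<dots> \<ge> 0"
    using assms q by (simp add: add_pos_nonneg)
  finally show ?thesis
    by linarith
qed

lemma bdf2_first_term_lower_bound:
  assumes "0 < tau t 1" "0 < tau t 2" "0 < \<delta>" "\<delta> < r_max"
  shows "(C_r * \<delta> + bdf2_cross_weight (r_max - \<delta>)) * x\<^sup>2 / tau t 2 \<le> 2 * x * (bdf2 t 2 0 * x)"
proof -
  define r where "r = ratio t 2"
  have "0 < r"
    using assms by (simp add: r_def ratio_def)
  have "C_r * \<delta> + bdf2_cross_weight (r_max - \<delta>) \<le> 2"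
    using C_r_delta_bound[of \<delta> 0] assms by simp
  also have "\<dots> \<le> 2 * (1 + 2 * r) / (1 + r)"
    using \<open>0 < r\<close> by (simp add: field_simps)
  finally have "(C_r * \<delta> + bdf2_cross_weight (r_max - \<delta>)) / tau t 2 \<le> 2 * (1 + 2 * r) / (1 + r) / tau t 2"
    by (rule divide_right_mono) (use assms in simp)
  also have "\<dots> = 2 * bdf2 t 2 0"
    by (simp add: bdf2_def r_def)
  finally show ?thesis
    using mult_right_mono[OF _ zero_le_power2[of x]] by (fastforce simp: power2_eq_square algebra_simps)
qed

lemma bdf2_term_lower_bound:
  fixes x y :: real
  assumes \<tau>: "0 < tau t k" "0 < tau t (k - 1)"
    and k: "3 \<le> k" "ratio t k \<le> r_max - \<delta>"
    and \<delta>: "0 < \<delta>" "\<delta> < r_max"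
  defines "F \<equiv> bdf2_cross_weight (r_max - \<delta>)"
  shows "(C_r * \<delta> + F) * x\<^sup>2 / tau t k - F * y\<^sup>2 / tau t (k - 1)
    \<le> 2 * x * (bdf2 t k 0 * x + bdf2 t k 1 * y)"
proof -
  define r where "r = ratio t k"
  define w where "w = bdf2_cross_weight r"
  have "0 < r" "tau t k = r * tau t (k - 1)"
    using \<tau> by (simp_all add: r_def ratio_def)
  have "C_r * \<delta> + F \<le> 2 * (1 + 2 * r) / (1 + r) - w"
    using C_r_delta_bound[OF \<delta>, of r] \<open>0 < r\<close> k
    by (simp add: F_def w_def r_def bdf2_cross_weight_def diff_divide_distrib)
  then have "(C_r * \<delta> + F) / tau t k \<le> (2 * (1 + 2 * r) / (1 + r) - w) / tau t k"
    by (rule divide_right_mono) (use \<tau> in simp)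
  also have "\<dots> = 2 * bdf2 t k 0 - w / tau t k"
    using k by (simp add: bdf2_def r_def diff_divide_distrib)
  finally have "(C_r * \<delta> + F) * x\<^sup>2 / tau t k \<le> 2 * bdf2 t k 0 * x\<^sup>2 - w * (x\<^sup>2 / tau t k)"
    using mult_right_mono[OF _ zero_le_power2[of x]] by (fastforce simp: algebra_simps)
  moreover have "w \<le> F"
    using bdf2_cross_weight_mono \<open>0 < r\<close> k by (simp add: F_def w_def r_def)
  then have "w * y\<^sup>2 / tau t (k - 1) \<le> F * y\<^sup>2 / tau t (k - 1)"
    using \<tau> by (simp add: divide_right_mono mult_right_mono)
  moreover have "- w * (x\<^sup>2 / tau t k + y\<^sup>2 / tau t (k - 1)) \<le> 2 * bdf2 t k 1 * x * y"
    using bdf2_cross_term_young[OF \<tau>(2) \<open>0 < r\<close>, of x y] \<open>tau t k = r * tau t (k - 1)\<close> k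
    by (simp add: w_def bdf2_def r_def)
  ultimately show ?thesis
    by (simp add: algebra_simps power2_eq_square)
qed

lemma bdf2_quadratic_form_lower_bound:
  fixes x :: "nat \<Rightarrow> real"
  assumes tau_pos: "\<And>k. 1 \<le> k \<Longrightarrow> k \<le> N \<Longrightarrow> 0 < tau t k"
    and \<delta>: "0 < \<delta>" "\<delta> < r_max"
    and "\<And>k. 3 \<le> k \<Longrightarrow> k \<le> N \<Longrightarrow> ratio t k \<le> r_max - \<delta>"
    and "n \<le> N" "x 1 = 0"
  shows "C_r * \<delta> * (\<Sum>k = 2..n. x k ^ 2 / tau t k)
    \<le> (\<Sum>k = 2..n. 2 * x k * (bdf2 t k 0 * x k + bdf2 t k 1 * x (k - 1)))"
proof (cases "n = 0")
  case False
  define F where "F = bdf2_cross_weight (r_max - \<delta>)"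
  define g where "g k = F * x k ^ 2 / tau t k" for k
  have "0 \<le> F"
    using \<delta> by (simp add: F_def bdf2_cross_weight_def)
  have "(\<Sum>k = 2..n. g k - g (k - 1)) = g n"
    using sum_telescope''[of 1 n g] False \<open>x 1 = 0\<close> by (simp add: g_def numeral_2_eq_2)
  moreover have "g n \<ge> 0"
    using False tau_pos[of n] \<open>n \<le> N\<close> \<open>0 \<le> F\<close> by (simp add: g_def)
  ultimately have "C_r * \<delta> * (\<Sum>k = 2..n. x k ^ 2 / tau t k)
      \<le> C_r * \<delta> * (\<Sum>k = 2..n. x k ^ 2 / tau t k) + (\<Sum>k = 2..n. g k - g (k - 1))"
    by simp
  also have "\<dots> = (\<Sum>k = 2..n. (C_r * \<delta> + F) * x k ^ 2 / tau t k - F * x (k - 1) ^ 2 / tau t (k - 1))"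
    by (simp add: g_def sum_distrib_left sum.distrib[symmetric] algebra_simps add_divide_distrib
        numeral_2_eq_2)
  also have "\<dots> \<le> (\<Sum>k = 2..n. 2 * x k * (bdf2 t k 0 * x k + bdf2 t k 1 * x (k - 1)))"
  proof (intro sum_mono)
    fix k
    assume k: "k \<in> {2..n}"
    show "(C_r * \<delta> + F) * x k ^ 2 / tau t k - F * x (k - 1) ^ 2 / tau t (k - 1)
        \<le> 2 * x k * (bdf2 t k 0 * x k + bdf2 t k 1 * x (k - 1))"
    proof (cases "k = 2")
      case True
      then show ?thesis
        using bdf2_first_term_lower_bound[of t \<delta> "x 2"] tau_pos[of 1] tau_pos[of 2] k assms
        by (simp add: F_def)
    next
      case False
      then show ?thesis
        unfolding F_def using k assms by (intro bdf2_term_lower_bound) auto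
    qed
  qed
  finally show ?thesis .
qed simp

definition dirichlet_h :: "real \<Rightarrow> nat \<Rightarrow> (nat \<Rightarrow> real) \<Rightarrow> (nat \<Rightarrow> real) \<Rightarrow> real" where
  "dirichlet_h h M v w = (\<Sum>i<M. (v (Suc i) - v i) * (w (Suc i) - w i) / h)"

lemma sum_by_parts:
  fixes d w :: "nat \<Rightarrow> real"
  shows "(\<Sum>i = 1..m. (d (i - 1) - d i) * w i)
    = (\<Sum>i<Suc m. d i * (w (Suc i) - w i)) - d m * w (Suc m) + d 0 * w 0"
  by (induction m) (auto simp: algebra_simps)

lemma ip_h_neg_lap_h_eq_dirichlet_h:
  assumes "h \<noteq> 0" "w 0 = 0" "w M = 0"
  shows "ip_h h M (\<lambda>i. - lap_h h v i) w = dirichlet_h h M v w"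
proof (cases M)
  case (Suc m)
  define d where "d i = v (Suc i) - v i" for i
  have "ip_h h M (\<lambda>i. - lap_h h v i) w = (\<Sum>i = 1..m. (d (i - 1) - d i) * w i) / h"
    unfolding ip_h_def Suc diff_Suc_1 sum_divide_distrib
  proof (intro sum.cong refl)
    fix i
    assume "i \<in> {1..m}"
    then have "Suc (i - 1) = i"
      by simp
    then show "h * - lap_h h v i * w i = (d (i - 1) - d i) * w i / h"
      using assms(1) by (simp add: lap_h_def d_def field_simps power2_eq_square)
  qed
  also have "\<dots> = (\<Sum>i<M. d i * (w (Suc i) - w i)) / h"
    using sum_by_parts[where d = d and w = w and m = m] assms Suc by simp
  also have "\<dots> = dirichlet_h h M v w"
    by (simp add: dirichlet_h_def d_def sum_divide_distrib)
  finally show ?thesis .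
qed (simp add: ip_h_def dirichlet_h_def)

lemma dirichlet_h_sum_left:
  "(\<Sum>j\<in>A. c j * dirichlet_h h M (v j) w) = dirichlet_h h M (\<lambda>i. \<Sum>j\<in>A. c j * v j i) w"
  unfolding dirichlet_h_def
  by (simp add: sum_distrib_left sum_divide_distrib sum_subtractf[symmetric] algebra_simps
      sum.swap[where A = A])

lemma ip_h_grad_h_sum_left:
  "(\<Sum>j\<in>A. c j * ip_h h M (grad_h h (v j)) w) = ip_h h M (grad_h h (\<lambda>i. \<Sum>j\<in>A. c j * v j i)) w"
  unfolding ip_h_def grad_h_def
  by (simp add: sum_distrib_left sum_distrib_right sum_divide_distrib sum_subtractf[symmetric]
      algebra_simps sum.swap[where A = A])

lemma dirichlet_h_bdf2_lower_bound:
  fixes w :: "nat \<Rightarrow> nat \<Rightarrow> real"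
  assumes "\<And>k. 1 \<le> k \<Longrightarrow> k \<le> N \<Longrightarrow> 0 < tau t k"
    and "0 < \<delta>" "\<delta> < r_max"
    and "\<And>k. 3 \<le> k \<Longrightarrow> k \<le> N \<Longrightarrow> ratio t k \<le> r_max - \<delta>"
    and "n \<le> N" "0 < h" "\<And>i. w 1 i = 0"
  shows "C_r * \<delta> * (\<Sum>k = 2..n. dirichlet_h h M (w k) (w k) / tau t k)
    \<le> (\<Sum>k = 2..n. 2 * dirichlet_h h M (w k) (\<lambda>i. bdf2 t k 0 * w k i + bdf2 t k 1 * w (k - 1) i))"
proof -
  define D where "D k i = w k (Suc i) - w k i" for k i
  have "C_r * \<delta> * (\<Sum>k = 2..n. dirichlet_h h M (w k) (w k) / tau t k)
      = (\<Sum>i<M. C_r * \<delta> * (\<Sum>k = 2..n. D k i ^ 2 / tau t k) / h)"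
    by (simp add: dirichlet_h_def D_def sum_distrib_left sum_divide_distrib power2_eq_square
        sum.swap[where A = "{2..n}"] ac_simps)
  also have "\<dots> \<le> (\<Sum>i<M. (\<Sum>k = 2..n. 2 * D k i * (bdf2 t k 0 * D k i + bdf2 t k 1 * D (k - 1) i)) / h)"
    using assms
    by (intro sum_mono divide_right_mono bdf2_quadratic_form_lower_bound[where N = N])
      (auto simp: D_def)
  also have "\<dots> = (\<Sum>k = 2..n. 2 * dirichlet_h h M (w k) (\<lambda>i. bdf2 t k 0 * w k i + bdf2 t k 1 * w (k - 1) i))"
    by (simp add: dirichlet_h_def D_def sum_distrib_left sum_divide_distrib algebra_simps
        sum.swap[where A = "{2..n}"])
  finally show ?thesis .
qed

lemma grad_h_young:
  assumes "0 < h" "0 < a" "1 \<le> i"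
  shows "2 * \<epsilon> * (h * grad_h h v i * u i)
    \<le> a / 2 * ((v (Suc i) - v i)\<^sup>2 / h + (v i - v (i - 1))\<^sup>2 / h) + \<epsilon>\<^sup>2 / a * (h * u i * u i)"
proof -
  have young: "2 * \<epsilon> * p * q \<le> a * p\<^sup>2 / h + \<epsilon>\<^sup>2 / a * h * q\<^sup>2" for p q :: real
  proof -
    have "0 \<le> (a * p - \<epsilon> * h * q)\<^sup>2 / (a * h)"
      using assms by simp
    also have "\<dots> = a * p\<^sup>2 / h + \<epsilon>\<^sup>2 / a * h * q\<^sup>2 - 2 * \<epsilon> * p * q"
      using assms by (simp add: field_simps power2_eq_square)
    finally show ?thesis
      by simp
  qed
  define p1 p0 where "p1 = v (Suc i) - v i" and "p0 = v i - v (i - 1)"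
  define E where "E = \<epsilon>\<^sup>2 / a * h * (u i)\<^sup>2"
  have "2 * \<epsilon> * (h * grad_h h v i * u i) = (2 * \<epsilon> * p1 * u i + 2 * \<epsilon> * p0 * u i) / 2"
    using assms by (simp add: grad_h_def p1_def p0_def field_simps)
  also have "\<dots> \<le> ((a * p1\<^sup>2 / h + E) + (a * p0\<^sup>2 / h + E)) / 2"
    unfolding E_def by (intro divide_right_mono add_mono young) simp
  also have "\<dots> = a / 2 * (p1\<^sup>2 / h + p0\<^sup>2 / h) + E"
    by (simp add: field_simps)
  finally show ?thesis
    by (simp add: p1_def p0_def E_def power2_eq_square mult.assoc)
qed

lemma ip_h_grad_h_le_dirichlet_h:
  assumes "0 < h" "0 < a"
  shows "2 * \<epsilon> * ip_h h M (grad_h h v) u \<le> a * dirichlet_h h M v v + \<epsilon>\<^sup>2 / a * ip_h h M u u"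
proof -
  define d where "d i = (v (Suc i) - v i)\<^sup>2 / h" for i
  have shift: "(\<Sum>i = 1..m. d (i - 1)) = (\<Sum>i<m. d i)" for m
    by (induction m) auto
  have "2 * \<epsilon> * ip_h h M (grad_h h v) u = (\<Sum>i = 1..M - 1. 2 * \<epsilon> * (h * grad_h h v i * u i))"
    by (simp add: ip_h_def sum_distrib_left)
  also have "\<dots> \<le> (\<Sum>i = 1..M - 1. a / 2 * d i + a / 2 * d (i - 1) + \<epsilon>\<^sup>2 / a * (h * u i * u i))"
    using grad_h_young[OF assms] by (intro sum_mono) (simp add: d_def distrib_left)
  also have "\<dots> = a / 2 * (\<Sum>i = 1..M - 1. d i) + a / 2 * (\<Sum>i<M - 1. d i) + \<epsilon>\<^sup>2 / a * ip_h h M u u"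
    by (simp only: ip_h_def sum.distrib sum_distrib_left[symmetric] shift)
  also have "\<dots> \<le> a / 2 * (\<Sum>i<M. d i) + a / 2 * (\<Sum>i<M. d i) + \<epsilon>\<^sup>2 / a * ip_h h M u u"
    using assms by (intro add_mono mult_left_mono sum_mono2) (auto simp: d_def)
  also have "\<dots> = a * dirichlet_h h M v v + \<epsilon>\<^sup>2 / a * ip_h h M u u"
    by (simp add: dirichlet_h_def d_def power2_eq_square)
  finally show ?thesis .
qed

lemma norm_h_power2:
  "0 \<le> h \<Longrightarrow> (norm_h h M u)\<^sup>2 = ip_h h M u u"
  unfolding norm_h_def ip_h_def by (simp add: sum_nonneg mult.assoc)

definition doc_kernels :: "(nat \<Rightarrow> real) \<Rightarrow> nat \<Rightarrow> (nat \<Rightarrow> nat \<Rightarrow> real) \<Rightarrow> bool" where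
  "doc_kernels t N \<theta> \<longleftrightarrow> (\<forall>m k. 1 \<le> k \<longrightarrow> k \<le> m \<longrightarrow> m \<le> N \<longrightarrow>
     (\<Sum>j = k..m. \<theta> m (m - j) * bdf2 t j (j - k)) = (if m = k then 1 else 0))"

lemma doc_kernels_diagonal:
  assumes "doc_kernels t N \<theta>" "1 \<le> m" "m \<le> N"
  shows "\<theta> m 0 * bdf2 t m 0 = 1"
proof -
  have "(\<Sum>j = m..m. \<theta> m (m - j) * bdf2 t j (j - m)) = (if m = m then 1 else 0)"
    using assms unfolding doc_kernels_def by blast
  then show ?thesis
    by simp
qed

lemma doc_kernels_recurrence:
  assumes "doc_kernels t N \<theta>" "1 \<le> l" "l < m" "m \<le> N"
  shows "\<theta> m (m - l) * bdf2 t l 0 + \<theta> m (m - Suc l) * bdf2 t (Suc l) 1 = 0"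
proof -
  have "(\<Sum>j = Suc (Suc l)..m. \<theta> m (m - j) * bdf2 t j (j - l)) = 0"
    by (intro sum.neutral) (auto simp: bdf2_def)
  moreover have "(\<Sum>j = l..m. \<theta> m (m - j) * bdf2 t j (j - l)) = 0"
    using assms by (auto simp: doc_kernels_def)
  ultimately show ?thesis
    using assms by (simp add: sum.atLeast_Suc_atMost)
qed

lemma bdf2_diagonal_pos:
  assumes tau_pos: "\<And>k. 1 \<le> k \<Longrightarrow> k \<le> N \<Longrightarrow> 0 < tau t k" and "1 \<le> k" "k \<le> N"
  shows "0 < bdf2 t k 0"
proof (cases "k = 1")
  case False
  then have "0 < tau t k" "0 < ratio t k"
    using assms tau_pos[of "k - 1"] by (auto simp: ratio_def)
  then show ?thesis
    using False by (simp add: bdf2_def)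
qed (use assms in \<open>simp add: bdf2_def\<close>)

lemma doc_kernels_right_inverse:
  assumes doc: "doc_kernels t N \<theta>"
    and tau_pos: "\<And>k. 1 \<le> k \<Longrightarrow> k \<le> N \<Longrightarrow> 0 < tau t k"
    and "1 \<le> l" "l < k" "k \<le> N"
  shows "bdf2 t k 0 * \<theta> k (k - l) + bdf2 t k 1 * \<theta> (k - 1) (k - 1 - l) = 0"
proof -
  have pos: "0 < bdf2 t j 0" if "1 \<le> j" "j \<le> N" for j
    using tau_pos that by (rule bdf2_diagonal_pos)
  define E where "E l = bdf2 t k 0 * \<theta> k (k - l) + bdf2 t k 1 * \<theta> (k - 1) (k - 1 - l)" for l
  have top: "E (k - 1) = 0"
  proof -
    have "0 < bdf2 t (k - 1) 0"
      using assms by (intro pos) auto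
    have "\<theta> k 1 * bdf2 t (k - 1) 0 = - (\<theta> k 0 * bdf2 t k 1)"
      using doc_kernels_recurrence[OF doc, of "k - 1" k] assms by (simp add: eq_neg_iff_add_eq_0)
    moreover have "\<theta> (k - 1) 0 * bdf2 t (k - 1) 0 = 1"
      using doc_kernels_diagonal[OF doc, of "k - 1"] assms by simp
    moreover have "bdf2 t (k - 1) 0 * E (k - 1)
        = bdf2 t k 0 * (\<theta> k 1 * bdf2 t (k - 1) 0) + bdf2 t k 1 * (\<theta> (k - 1) 0 * bdf2 t (k - 1) 0)"
      using assms by (simp add: E_def algebra_simps)
    ultimately have "bdf2 t (k - 1) 0 * E (k - 1) = bdf2 t k 1 * (1 - \<theta> k 0 * bdf2 t k 0)"
      by (simp add: algebra_simps)
    also have "\<dots> = 0"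
      using doc_kernels_diagonal[OF doc, of k] assms by simp
    finally show ?thesis
      using \<open>0 < bdf2 t (k - 1) 0\<close> by simp
  qed
  have step: "E j = 0" if "1 \<le> j" "j < k - 1" "E (Suc j) = 0" for j
  proof -
    have row_k: "\<theta> k (k - j) * bdf2 t j 0 = - (\<theta> k (k - Suc j) * bdf2 t (Suc j) 1)"
      using doc_kernels_recurrence[OF doc, of j k] that assms by (simp add: eq_neg_iff_add_eq_0)
    have row_k1: "\<theta> (k - 1) (k - 1 - j) * bdf2 t j 0
        = - (\<theta> (k - 1) (k - 1 - Suc j) * bdf2 t (Suc j) 1)"
      using doc_kernels_recurrence[OF doc, of j "k - 1"] that assms
      by (simp add: eq_neg_iff_add_eq_0)
    have "bdf2 t j 0 * E j
        = bdf2 t k 0 * (\<theta> k (k - j) * bdf2 t j 0) + bdf2 t k 1 * (\<theta> (k - 1) (k - 1 - j) * bdf2 t j 0)"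
      by (simp add: E_def algebra_simps)
    also have "\<dots> = - bdf2 t (Suc j) 1 * E (Suc j)"
      unfolding row_k row_k1 by (simp add: E_def algebra_simps)
    moreover have "0 < bdf2 t j 0"
      using that assms by (intro pos) auto
    ultimately show ?thesis
      using that by simp
  qed
  have "l \<le> k - 1"
    using assms by simp
  then have "E l = 0"
    by (induction l rule: inc_induct) (use top step \<open>1 \<le> l\<close> in auto)
  then show ?thesis
    by (simp add: E_def)
qed

text \<open>doc_conv theta u k is W^k; the sum starts at j = 2, so doc_conv theta u 1 = 0.\<close>

definition doc_conv :: "(nat \<Rightarrow> nat \<Rightarrow> real) \<Rightarrow> (nat \<Rightarrow> nat \<Rightarrow> real) \<Rightarrow> nat \<Rightarrow> nat \<Rightarrow> real" where
  "doc_conv \<theta> u k i = (\<Sum>j = 2..k. \<theta> k (k - j) * u j i)"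

lemma doc_conv_inversion:
  assumes doc: "doc_kernels t N \<theta>"
    and tau_pos: "\<And>k. 1 \<le> k \<Longrightarrow> k \<le> N \<Longrightarrow> 0 < tau t k"
    and "2 \<le> k" "k \<le> N"
  shows "u k i = bdf2 t k 0 * doc_conv \<theta> u k i + bdf2 t k 1 * doc_conv \<theta> u (k - 1) i"
proof -
  have split: "(\<Sum>j = 2..k. f j) = (\<Sum>j = 2..k - 1. f j) + f k" for f :: "nat \<Rightarrow> real"
    using assms by (cases k) (auto simp: sum.cl_ivl_Suc)
  have expand: "bdf2 t k 0 * doc_conv \<theta> u k i + bdf2 t k 1 * doc_conv \<theta> u (k - 1) i
      = (\<Sum>j = 2..k - 1. (bdf2 t k 0 * \<theta> k (k - j) + bdf2 t k 1 * \<theta> (k - 1) (k - 1 - j)) * u j i)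
        + bdf2 t k 0 * \<theta> k 0 * u k i"
    unfolding doc_conv_def split[of "\<lambda>j. \<theta> k (k - j) * u j i"]
    by (simp add: sum.distrib sum_distrib_left ring_distribs mult.assoc)
  have "(\<Sum>j = 2..k - 1. (bdf2 t k 0 * \<theta> k (k - j) + bdf2 t k 1 * \<theta> (k - 1) (k - 1 - j)) * u j i) = 0"
  proof (intro sum.neutral ballI)
    fix j
    assume "j \<in> {2..k - 1}"
    then have "bdf2 t k 0 * \<theta> k (k - j) + bdf2 t k 1 * \<theta> (k - 1) (k - 1 - j) = 0"
      using assms by (intro doc_kernels_right_inverse[OF doc tau_pos]) auto
    then show "(bdf2 t k 0 * \<theta> k (k - j) + bdf2 t k 1 * \<theta> (k - 1) (k - 1 - j)) * u j i = 0"
      by simp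
  qed
  moreover have "bdf2 t k 0 * \<theta> k 0 = 1"
    using doc_kernels_diagonal[OF doc] assms by (simp add: mult.commute)
  ultimately show ?thesis
    using expand by simp
qed

lemma doc_lap_form_lower_bound:
  assumes doc: "doc_kernels t N \<theta>"
    and tau_pos: "\<And>k. 1 \<le> k \<Longrightarrow> k \<le> N \<Longrightarrow> 0 < tau t k"
    and "0 < \<delta>" "\<delta> < r_max"
    and "\<And>k. 3 \<le> k \<Longrightarrow> k \<le> N \<Longrightarrow> ratio t k \<le> r_max - \<delta>"
    and "n \<le> N" "0 < h"
    and bc: "\<And>k. 2 \<le> k \<Longrightarrow> k \<le> n \<Longrightarrow> u k 0 = 0 \<and> u k M = 0"
  shows "C_r * \<delta> * (\<Sum>k = 2..n. dirichlet_h h M (doc_conv \<theta> u k) (doc_conv \<theta> u k) / tau t k)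
    \<le> 2 * (\<Sum>k = 2..n. \<Sum>j = 2..k. \<theta> k (k - j) * ip_h h M (\<lambda>i. - lap_h h (u j) i) (u k))"
proof -
  have "(\<Sum>j = 2..k. \<theta> k (k - j) * ip_h h M (\<lambda>i. - lap_h h (u j) i) (u k))
      = dirichlet_h h M (doc_conv \<theta> u k)
          (\<lambda>i. bdf2 t k 0 * doc_conv \<theta> u k i + bdf2 t k 1 * doc_conv \<theta> u (k - 1) i)"
    if "k \<in> {2..n}" for k
  proof -
    have "u k = (\<lambda>i. bdf2 t k 0 * doc_conv \<theta> u k i + bdf2 t k 1 * doc_conv \<theta> u (k - 1) i)"
      using that assms by (intro ext doc_conv_inversion[OF doc tau_pos]) auto
    moreover have "ip_h h M (\<lambda>i. - lap_h h (u j) i) (u k) = dirichlet_h h M (u j) (u k)" for j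
      using bc[of k] that assms by (intro ip_h_neg_lap_h_eq_dirichlet_h) auto
    ultimately show ?thesis
      by (simp add: dirichlet_h_sum_left doc_conv_def[abs_def])
  qed
  then have "2 * (\<Sum>k = 2..n. \<Sum>j = 2..k. \<theta> k (k - j) * ip_h h M (\<lambda>i. - lap_h h (u j) i) (u k))
      = (\<Sum>k = 2..n. 2 * dirichlet_h h M (doc_conv \<theta> u k)
          (\<lambda>i. bdf2 t k 0 * doc_conv \<theta> u k i + bdf2 t k 1 * doc_conv \<theta> u (k - 1) i))"
    by (simp add: sum_distrib_left)
  also have "\<dots> \<ge> C_r * \<delta> * (\<Sum>k = 2..n. dirichlet_h h M (doc_conv \<theta> u k) (doc_conv \<theta> u k) / tau t k)"
    using assms by (intro dirichlet_h_bdf2_lower_bound[where N = N]) (auto simp: doc_conv_def)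
  finally show ?thesis .
qed

theorem mainTheorem8:
  fixes t :: "nat \<Rightarrow> real" and N :: nat and T :: real
    and theta :: "nat \<Rightarrow> nat \<Rightarrow> real"
    and \<delta> \<epsilon> h :: real and M n :: nat
    and u :: "nat \<Rightarrow> nat \<Rightarrow> real"
  assumes t0: "t 0 = 0" and tN: "t N = T"
    and mono: "\<And>k. 1 \<le> k \<Longrightarrow> k \<le> N \<Longrightarrow> t (k - 1) < t k"
    and delta: "0 < \<delta>" "\<delta> < r_max"
    and r2: "ratio t 2 > 0"
    and rk: "\<And>k. 3 \<le> k \<Longrightarrow> k \<le> N \<Longrightarrow> 0 < ratio t k \<and> ratio t k \<le> r_max - \<delta>"
    and doc: "\<And>m k. 1 \<le> k \<Longrightarrow> k \<le> m \<Longrightarrow> m \<le> N \<Longrightarrow>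
               (\<Sum>j = k..m. theta m (m - j) * bdf2 t j (j - k)) = (if m = k then 1 else 0)"
    and eps: "\<epsilon> > 0"
    and h: "h > 0"
    and n: "2 \<le> n" "n \<le> N"
    and bc: "\<And>k. 1 \<le> k \<Longrightarrow> k \<le> n \<Longrightarrow> u k 0 = 0 \<and> u k M = 0"
  shows "2 * (\<Sum>k = 2..n. \<Sum>j = 2..k. theta k (k - j) *
              ip_h h M (\<lambda>i. - lap_h h (u j) i) (u k))
         + \<epsilon>^2 / (C_r * \<delta>) * (\<Sum>k = 2..n. tau t k * (norm_h h M (u k))^2)
         \<ge> 2 * \<epsilon> * (\<Sum>k = 2..n. \<Sum>j = 2..k. theta k (k - j) *
              ip_h h M (grad_h h (u j)) (u k))"
proof -
  \<comment> \<open>The positivity of the step ratios assumed in r2 and rk already follows from mono.\<close>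
  have tau_pos: "\<And>k. 1 \<le> k \<Longrightarrow> k \<le> N \<Longrightarrow> 0 < tau t k"
    using mono by (simp add: tau_def)
  have "doc_kernels t N theta"
    using doc by (simp add: doc_kernels_def)
  define c where "c = C_r * \<delta>"
  define W where "W = doc_conv theta u"
  have "0 < c"
    using delta by (simp add: c_def C_r_def)
  have "2 * \<epsilon> * (\<Sum>k = 2..n. \<Sum>j = 2..k. theta k (k - j) * ip_h h M (grad_h h (u j)) (u k))
      = (\<Sum>k = 2..n. 2 * \<epsilon> * ip_h h M (grad_h h (W k)) (u k))"
    by (simp add: sum_distrib_left ip_h_grad_h_sum_left W_def doc_conv_def[abs_def])
  also have "\<dots> \<le> (\<Sum>k = 2..n. c / tau t k * dirichlet_h h M (W k) (W k)
      + \<epsilon>\<^sup>2 / (c / tau t k) * ip_h h M (u k) (u k))"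
    using tau_pos n \<open>0 < c\<close> h by (intro sum_mono ip_h_grad_h_le_dirichlet_h) auto
  also have "\<dots> = c * (\<Sum>k = 2..n. dirichlet_h h M (W k) (W k) / tau t k)
      + \<epsilon>\<^sup>2 / c * (\<Sum>k = 2..n. tau t k * (norm_h h M (u k))\<^sup>2)"
    using h by (simp add: sum.distrib sum_distrib_left norm_h_power2 mult.assoc)
  also have "c * (\<Sum>k = 2..n. dirichlet_h h M (W k) (W k) / tau t k)
      \<le> 2 * (\<Sum>k = 2..n. \<Sum>j = 2..k. theta k (k - j) * ip_h h M (\<lambda>i. - lap_h h (u j) i) (u k))"
    unfolding c_def W_def using \<open>doc_kernels t N theta\<close> tau_pos delta rk n h bc
    by (intro doc_lap_form_lower_bound[where N = N]) auto
  finally show ?thesis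
    by (simp add: c_def)
qed

end
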